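(* Let $T_1$ and $T_2$ be trees with $\gamma_P(T_1) = \gamma(T_1)$ and $\gamma_P(T_2) = \gamma(T_2)$. Then $\gamma_P(T_1 \Box T_2) \ge \gamma_P(T_1)\gamma_P(T_2)$.
   Context: $\gamma(G)$ denotes the domination number of $G$ (minimum size of a set $D$ with $N[D]=V(G)$). For $S \subseteq V(G)$: initially all vertices of $S$ and their neighbors are observed; then, repeatedly, any vertex that is the only unobserved neighbor of some observed vertex becomes observed. $S$ is a power dominating set if eventually all vertices are observed; $\gamma_P(G)$ is the minimum size of a power dominating set. The Cartesian product $G \Box H$ has vertex set $V(G)\times V(H)$, with $(g_1,h_1)$ adjacent to $(g_2,h_2)$ iff either $g_1=g_2$ and $h_1h_2 \in E(H)$, or $h_1=h_2$ and $g_1g_2\in E(G)$. *)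

theory Defs
  imports Main
begin

record 'a graph =
  verts :: "'a set"
  adj :: "'a \<Rightarrow> 'a \<Rightarrow> bool"

definition graph :: "'a graph \<Rightarrow> bool" where
  "graph G \<longleftrightarrow> finite (verts G) \<and>
     (\<forall>u v. adj G u v \<longrightarrow> u \<in> verts G \<and> v \<in> verts G) \<and>
     (\<forall>u v. adj G u v \<longrightarrow> adj G v u) \<and> (\<forall>v. \<not> adj G v v)"

definition nbhd :: "'a graph \<Rightarrow> 'a \<Rightarrow> 'a set" where
  "nbhd G v = {u \<in> verts G. adj G v u}"

definition closed_nbhd_set :: "'a graph \<Rightarrow> 'a set \<Rightarrow> 'a set" where
  "closed_nbhd_set G S = S \<union> {u \<in> verts G. \<exists>v\<in>S. adj G v u}"

definition is_walk :: "'a graph \<Rightarrow> 'a list \<Rightarrow> bool" where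
  "is_walk G xs \<longleftrightarrow> xs \<noteq> [] \<and> set xs \<subseteq> verts G \<and>
     (\<forall>i. Suc i < length xs \<longrightarrow> adj G (xs ! i) (xs ! Suc i))"

definition connected :: "'a graph \<Rightarrow> bool" where
  "connected G \<longleftrightarrow> verts G \<noteq> {} \<and>
     (\<forall>u\<in>verts G. \<forall>v\<in>verts G. \<exists>xs. is_walk G xs \<and> hd xs = u \<and> last xs = v)"

definition is_cycle :: "'a graph \<Rightarrow> 'a list \<Rightarrow> bool" where
  "is_cycle G xs \<longleftrightarrow> is_walk G xs \<and> length xs \<ge> 3 \<and> distinct xs \<and> adj G (last xs) (hd xs)"

definition tree :: "'a graph \<Rightarrow> bool" where
  "tree G \<longleftrightarrow> graph G \<and> connected G \<and> (\<nexists>xs. is_cycle G xs)"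

definition dominating_set :: "'a graph \<Rightarrow> 'a set \<Rightarrow> bool" where
  "dominating_set G D \<longleftrightarrow> D \<subseteq> verts G \<and> closed_nbhd_set G D = verts G"

definition domination_number :: "'a graph \<Rightarrow> nat" where
  "domination_number G = (LEAST k. \<exists>D. dominating_set G D \<and> card D = k)"

inductive_set observed :: "'a graph \<Rightarrow> 'a set \<Rightarrow> 'a set" for G S where
  init: "v \<in> closed_nbhd_set G S \<Longrightarrow> v \<in> verts G \<Longrightarrow> v \<in> observed G S"
| propagate: "u \<in> observed G S \<Longrightarrow> v \<in> nbhd G u \<Longrightarrow>
         (\<forall>w \<in> nbhd G u. w \<noteq> v \<longrightarrow> w \<in> observed G S) \<Longrightarrow> v \<in> observed G S"

definition power_dominating_set :: "'a graph \<Rightarrow> 'a set \<Rightarrow> bool" where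
  "power_dominating_set G S \<longleftrightarrow> S \<subseteq> verts G \<and> observed G S = verts G"

definition power_domination_number :: "'a graph \<Rightarrow> nat" where
  "power_domination_number G = (LEAST k. \<exists>S. power_dominating_set G S \<and> card S = k)"

definition cart_prod :: "'a graph \<Rightarrow> 'b graph \<Rightarrow> ('a \<times> 'b) graph" where
  "cart_prod G H = \<lparr> verts = verts G \<times> verts H,
     adj = (\<lambda>(g1, h1) (g2, h2).
        g1 \<in> verts G \<and> g2 \<in> verts G \<and> h1 \<in> verts H \<and> h2 \<in> verts H \<and>
        ((g1 = g2 \<and> adj H h1 h2) \<or> (h1 = h2 \<and> adj G g1 g2))) \<rparr>"

end

theory Submission
  imports Defs
begin

text \<open>
A fort is a nonempty vertex set F such that no vertex outside F has exactly one neighbour in F.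
Observation can never enter a fort whose closed neighbourhood avoids S, so every power dominating
set meets the closed neighbourhood of every fort, and a family of forts with pairwise disjoint
closed neighbourhoods bounds the power domination number from below. Products of forts of
G and H are forts of their Cartesian product, and closed neighbourhoods of products lie in the
products of closed neighbourhoods, so packings multiply.

For a tree T with power domination number equal to its domination number take a minimum
dominating set D. If some d in D has at most one leaf neighbour and a neighbour of degree at
least two, then D - {d} is still power dominating (d and all its neighbours are forced from the
vertices at distance two, as T has no 3- or 4-cycles), which is impossible. If d has no such
neighbour, T is a star and the single fort V(T) suffices. Otherwise every d in D carries two
leaves, and these leaf pairs form |D| forts with disjoint closed neighbourhoods.
\<close>

subsection \<open>Graphs, domination and observation\<close>

lemma graph_adj_sym: "graph G \<Longrightarrow> adj G u v \<Longrightarrow> adj G v u"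
  unfolding graph_def by blast

lemma graph_adj_verts: "graph G \<Longrightarrow> adj G u v \<Longrightarrow> u \<in> verts G \<and> v \<in> verts G"
  unfolding graph_def by blast

lemma graph_adj_neq: "graph G \<Longrightarrow> adj G u v \<Longrightarrow> u \<noteq> v"
  unfolding graph_def by blast

lemma tree_graph: "tree G \<Longrightarrow> graph G"
  unfolding tree_def by blast

lemma graph_cart_prod: "graph G \<Longrightarrow> graph H \<Longrightarrow> graph (cart_prod G H)"
  unfolding graph_def cart_prod_def by auto

lemma observed_subset_verts: "observed G S \<subseteq> verts G"
proof
  show "x \<in> verts G" if "x \<in> observed G S" for x
    using that
  proof induction
    case (init v)
    then show ?case by blast
  next
    case (propagate u v)
    then show ?case unfolding nbhd_def by blast
  qed
qed

lemma observed_propagate: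
  assumes "graph G" "u \<in> observed G S" "adj G u v"
    and "\<And>w. adj G u w \<Longrightarrow> w \<noteq> v \<Longrightarrow> w \<in> observed G S"
  shows "v \<in> observed G S"
proof (rule observed.propagate[OF assms(2)])
  show "v \<in> nbhd G u"
    using graph_adj_verts[OF assms(1,3)] assms(3) unfolding nbhd_def by blast
  show "\<forall>w\<in>nbhd G u. w \<noteq> v \<longrightarrow> w \<in> observed G S"
    using assms(4) unfolding nbhd_def by blast
qed

lemma power_dominating_set_if_dominating_set:
  assumes "dominating_set G S"
  shows "power_dominating_set G S"
proof -
  have "verts G \<subseteq> observed G S"
    using assms observed.init[of _ G S] unfolding dominating_set_def by blast
  then show ?thesis
    using assms observed_subset_verts[of G S]
    unfolding power_dominating_set_def dominating_set_def by blast
qed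

lemma dominating_set_verts: "graph G \<Longrightarrow> dominating_set G (verts G)"
  unfolding dominating_set_def closed_nbhd_set_def graph_def by auto

lemma domination_number_attained:
  assumes "graph G"
  obtains D where "dominating_set G D" "card D = domination_number G"
  unfolding domination_number_def
  by (rule LeastI_ex[of "\<lambda>k. \<exists>D. dominating_set G D \<and> card D = k", THEN exE])
    (use dominating_set_verts[OF assms] that in blast)+

lemma power_domination_number_attained:
  assumes "graph G"
  obtains S where "power_dominating_set G S" "card S = power_domination_number G"
  unfolding power_domination_number_def
  by (rule LeastI_ex[of "\<lambda>k. \<exists>S. power_dominating_set G S \<and> card S = k", THEN exE])
    (use power_dominating_set_if_dominating_set[OF dominating_set_verts[OF assms]] that in blast)+

lemma power_domination_number_le:
  "power_dominating_set G S \<Longrightarrow> power_domination_number G \<le> card S"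
  unfolding power_domination_number_def by (rule Least_le) blast

subsection \<open>Forts\<close>

definition fort :: "'a graph \<Rightarrow> 'a set \<Rightarrow> bool" where
  "fort G F \<longleftrightarrow> F \<noteq> {} \<and> F \<subseteq> verts G \<and>
     (\<forall>x\<in>verts G. x \<notin> F \<longrightarrow> (\<forall>v\<in>F. adj G x v \<longrightarrow> (\<exists>w\<in>F. w \<noteq> v \<and> adj G x w)))"

definition fort_packing :: "'a graph \<Rightarrow> 'a set set \<Rightarrow> bool" where
  "fort_packing G A \<longleftrightarrow> finite A \<and> (\<forall>F\<in>A. fort G F) \<and>
     (\<forall>F\<in>A. \<forall>F'\<in>A. F \<noteq> F' \<longrightarrow> closed_nbhd_set G F \<inter> closed_nbhd_set G F' = {})"

lemma fort_packing_fort: "fort_packing G A \<Longrightarrow> F \<in> A \<Longrightarrow> fort G F"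
  unfolding fort_packing_def by blast

lemma fort_packing_disjoint:
  "fort_packing G A \<Longrightarrow> F \<in> A \<Longrightarrow> F' \<in> A \<Longrightarrow> F \<noteq> F'
    \<Longrightarrow> closed_nbhd_set G F \<inter> closed_nbhd_set G F' = {}"
  unfolding fort_packing_def by blast

lemma closed_nbhd_set_meets_sym:
  assumes "graph G" "closed_nbhd_set G S \<inter> F \<noteq> {}"
  shows "S \<inter> closed_nbhd_set G F \<noteq> {}"
proof -
  obtain v where v: "v \<in> F" "v \<in> S \<or> (\<exists>s\<in>S. adj G s v)"
    using assms(2) unfolding closed_nbhd_set_def by blast
  then consider "v \<in> S" | s where "s \<in> S" "adj G s v" by blast
  then show ?thesis
  proof cases
    case 1
    with v show ?thesis unfolding closed_nbhd_set_def by blast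
  next
    case 2
    with v graph_adj_sym[OF assms(1) 2(2)] graph_adj_verts[OF assms(1) 2(2)]
    show ?thesis unfolding closed_nbhd_set_def by blast
  qed
qed

lemma fort_meets_power_dominating_set:
  assumes G: "graph G" and S: "power_dominating_set G S" and F: "fort G F"
  shows "S \<inter> closed_nbhd_set G F \<noteq> {}"
proof
  assume avoid: "S \<inter> closed_nbhd_set G F = {}"
  have "x \<notin> F" if "x \<in> observed G S" for x
    using that
  proof induction
    case (init v)
    then show ?case using avoid closed_nbhd_set_meets_sym[OF G, of S F] by blast
  next
    case (propagate u v)
    show ?case
    proof
      assume "v \<in> F"
      moreover have "u \<in> verts G" "adj G u v"
        using propagate.hyps observed_subset_verts[of G S] unfolding nbhd_def by blast+
      ultimately obtain w where "w \<in> F" "w \<noteq> v" "adj G u w"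
        using F propagate.IH(1) unfolding fort_def by blast
      moreover have "w \<in> nbhd G u"
        using graph_adj_verts[OF G \<open>adj G u w\<close>] \<open>adj G u w\<close> unfolding nbhd_def by blast
      ultimately show False using propagate.IH(2) by blast
    qed
  qed
  moreover have "F \<noteq> {}" "F \<subseteq> observed G S"
    using F S unfolding fort_def power_dominating_set_def by auto
  ultimately show False by blast
qed

lemma card_fort_packing_le_power_domination_number:
  assumes G: "graph G" and A: "fort_packing G A"
  shows "card A \<le> power_domination_number G"
proof -
  obtain S where S: "power_dominating_set G S" "card S = power_domination_number G"
    using power_domination_number_attained[OF G] .
  have "finite S"
    using S(1) G unfolding power_dominating_set_def graph_def by (meson finite_subset)
  have "\<exists>s. s \<in> S \<inter> closed_nbhd_set G F" if "F \<in> A" for F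
    using fort_meets_power_dominating_set[OF G S(1) fort_packing_fort[OF A that]] by blast
  then obtain f where f: "\<And>F. F \<in> A \<Longrightarrow> f F \<in> S \<inter> closed_nbhd_set G F"
    by metis
  have "inj_on f A"
  proof (rule inj_onI)
    fix F F' assume "F \<in> A" "F' \<in> A" "f F = f F'"
    then have "closed_nbhd_set G F \<inter> closed_nbhd_set G F' \<noteq> {}"
      using f by (metis IntD2 disjoint_iff)
    with \<open>F \<in> A\<close> \<open>F' \<in> A\<close> A show "F = F'"
      unfolding fort_packing_def by blast
  qed
  moreover have "f ` A \<subseteq> S" using f by blast
  ultimately have "card A \<le> card S"
    using \<open>finite S\<close> by (rule card_inj_on_le)
  with S(2) show ?thesis by simp
qed

subsection \<open>Forts in Cartesian products\<close>

lemma fort_cart_prod: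
  assumes F: "fort G F" and F': "fort H F'"
  shows "fort (cart_prod G H) (F \<times> F')"
  unfolding fort_def
proof (intro conjI ballI impI)
  show "F \<times> F' \<noteq> {}" "F \<times> F' \<subseteq> verts (cart_prod G H)"
    using F F' unfolding fort_def cart_prod_def by auto
next
  fix x v assume x: "x \<in> verts (cart_prod G H)" "x \<notin> F \<times> F'" and v: "v \<in> F \<times> F'"
    and xv: "adj (cart_prod G H) x v"
  obtain g h g' h' where xe: "x = (g, h)" and ve: "v = (g', h')" by fastforce
  have verts: "g \<in> verts G" "h \<in> verts H" "g' \<in> F" "h' \<in> F'"
    using x v xv unfolding xe ve cart_prod_def by auto
  from xv consider "g = g'" "adj H h h'" | "h = h'" "adj G g g'"
    unfolding xe ve cart_prod_def by auto
  then show "\<exists>w\<in>F \<times> F'. w \<noteq> v \<and> adj (cart_prod G H) x w"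
  proof cases
    case 1
    with x(2) verts F' obtain w where "w \<in> F'" "w \<noteq> h'" "adj H h w"
      unfolding xe fort_def by blast
    with 1 verts F F' show ?thesis
      unfolding xe ve cart_prod_def fort_def by (intro bexI[of _ "(g, w)"]) auto
  next
    case 2
    with x(2) verts F obtain w where "w \<in> F" "w \<noteq> g'" "adj G g w"
      unfolding xe fort_def by blast
    with 2 verts F F' show ?thesis
      unfolding xe ve cart_prod_def fort_def by (intro bexI[of _ "(w, h)"]) auto
  qed
qed

lemma closed_nbhd_set_cart_prod_subset:
  "closed_nbhd_set (cart_prod G H) (F \<times> F')
     \<subseteq> closed_nbhd_set G F \<times> closed_nbhd_set H F'"
  unfolding closed_nbhd_set_def cart_prod_def by auto

lemma fort_packing_cart_prod:
  assumes A: "fort_packing G A" and B: "fort_packing H B"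
  defines "P \<equiv> (\<lambda>(F, F'). F \<times> F') ` (A \<times> B)"
  shows "fort_packing (cart_prod G H) P" "card P = card A * card B"
proof -
  have "inj_on (\<lambda>(F, F'). F \<times> F') (A \<times> B)"
    using fort_packing_fort[OF A] fort_packing_fort[OF B] unfolding fort_def
    by (intro inj_onI) (auto simp: times_eq_iff)
  then show "card P = card A * card B"
    unfolding P_def by (simp add: card_image card_cartesian_product)
  have disjoint: "closed_nbhd_set (cart_prod G H) (F \<times> F')
      \<inter> closed_nbhd_set (cart_prod G H) (E \<times> E') = {}"
    if "F \<in> A" "F' \<in> B" "E \<in> A" "E' \<in> B" "(F, F') \<noteq> (E, E')" for F F' E E'
  proof -
    from that(5) consider "F \<noteq> E" | "F' \<noteq> E'" by blast
    then have "closed_nbhd_set G F \<inter> closed_nbhd_set G E = {}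
        \<or> closed_nbhd_set H F' \<inter> closed_nbhd_set H E' = {}"
      using fort_packing_disjoint[OF A that(1,3)] fort_packing_disjoint[OF B that(2,4)]
      by cases simp_all
    then show ?thesis
      using closed_nbhd_set_cart_prod_subset[of G H F F'] closed_nbhd_set_cart_prod_subset[of G H E E']
      by blast
  qed
  show "fort_packing (cart_prod G H) P"
    unfolding fort_packing_def
  proof (intro conjI ballI impI)
    show "finite P" using A B unfolding fort_packing_def P_def by simp
  next
    fix Q assume "Q \<in> P"
    then obtain F F' where "Q = F \<times> F'" "F \<in> A" "F' \<in> B" unfolding P_def by auto
    then show "fort (cart_prod G H) Q"
      using fort_packing_fort[OF A] fort_packing_fort[OF B] fort_cart_prod by metis
  next
    fix Q Q' assume "Q \<in> P" "Q' \<in> P" "Q \<noteq> Q'"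
    then obtain F F' E E' where "Q = F \<times> F'" "Q' = E \<times> E'" "(F, F') \<noteq> (E, E')"
      "F \<in> A" "F' \<in> B" "E \<in> A" "E' \<in> B"
      unfolding P_def by auto
    then show "closed_nbhd_set (cart_prod G H) Q \<inter> closed_nbhd_set (cart_prod G H) Q' = {}"
      using disjoint by blast
  qed
qed

subsection \<open>Trees\<close>

lemma is_walk_Cons_Cons:
  "is_walk G (x # y # xs) \<longleftrightarrow> x \<in> verts G \<and> adj G x y \<and> is_walk G (y # xs)"
  unfolding is_walk_def by (auto simp: All_less_Suc2)

lemma is_walk_singleton: "is_walk G [x] \<longleftrightarrow> x \<in> verts G"
  unfolding is_walk_def by simp

lemma tree_no_triangle:
  assumes T: "tree G" and "adj G a b" "adj G b c" "a \<noteq> c"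
  shows "\<not> adj G c a"
proof
  assume "adj G c a"
  with assms tree_graph[OF T] have "is_cycle G [a, b, c]"
    by (auto simp: is_cycle_def is_walk_Cons_Cons is_walk_singleton
        dest: graph_adj_verts graph_adj_neq)
  with T show False unfolding tree_def by blast
qed

lemma tree_no_square:
  assumes T: "tree G" and "adj G a b" "adj G b c" "adj G c d" "a \<noteq> c" "b \<noteq> d"
  shows "\<not> adj G d a"
proof
  assume "adj G d a"
  with assms tree_graph[OF T] have "is_cycle G [a, b, c, d]"
    by (auto simp: is_cycle_def is_walk_Cons_Cons is_walk_singleton
        dest: graph_adj_verts graph_adj_neq)
  with T show False unfolding tree_def by blast
qed

lemma connected_adj_closed_subset:
  assumes "connected G" and closed: "\<And>u w. u \<in> C \<Longrightarrow> adj G u w \<Longrightarrow> w \<in> C"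
    and "c \<in> C" "c \<in> verts G"
  shows "verts G \<subseteq> C"
proof
  fix v assume "v \<in> verts G"
  then obtain xs where xs: "is_walk G xs" "hd xs = c" "last xs = v"
    using assms unfolding connected_def by blast
  have "xs ! i \<in> C" if "i < length xs" for i
    using that
  proof (induction i)
    case 0
    then show ?case using xs(2) \<open>c \<in> C\<close> by (simp add: hd_conv_nth)
  next
    case (Suc i)
    then show ?case using xs(1) closed unfolding is_walk_def by auto
  qed
  then show "v \<in> C"
    using xs is_walk_def last_conv_nth by (metis diff_less length_greater_0_conv zero_less_one)
qed


definition leaf_at :: "'a graph \<Rightarrow> 'a \<Rightarrow> 'a \<Rightarrow> bool" where
  "leaf_at G d l \<longleftrightarrow> adj G d l \<and> (\<forall>z. adj G l z \<longrightarrow> z = d)"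

lemma leaf_at_centre_unique:
  assumes G: "graph G" and "leaf_at G d l" "leaf_at G d' l"
  shows "d = d'"
  using assms(2) graph_adj_sym[OF G, of d' l] assms(3) unfolding leaf_at_def by blast

lemma fort_leaf_pair:
  assumes G: "graph G" and l: "leaf_at G d l" and l': "leaf_at G d l'" and "l \<noteq> l'"
  shows "fort G {l, l'}"
  unfolding fort_def
proof (intro conjI ballI impI)
  show "{l, l'} \<subseteq> verts G"
    using l l' graph_adj_verts[OF G] unfolding leaf_at_def by blast
next
  fix x v assume "x \<notin> {l, l'}" "v \<in> {l, l'}" "adj G x v"
  then have "x = d"
    using l l' graph_adj_sym[OF G] unfolding leaf_at_def by blast
  then show "\<exists>w\<in>{l, l'}. w \<noteq> v \<and> adj G x w"
    using \<open>v \<in> {l, l'}\<close> \<open>l \<noteq> l'\<close> l l' unfolding leaf_at_def by auto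
qed simp

lemma closed_nbhd_set_leaf_pair:
  "leaf_at G d l \<Longrightarrow> leaf_at G d l' \<Longrightarrow> closed_nbhd_set G {l, l'} \<subseteq> {l, l', d}"
  unfolding leaf_at_def closed_nbhd_set_def by blast

lemma fort_packing_leaf_pairs:
  assumes G: "graph G" and "finite D"
    and leaves: "\<And>d. d \<in> D \<Longrightarrow> leaf_at G d (f d) \<and> leaf_at G d (g d) \<and> f d \<noteq> g d"
  defines "P \<equiv> (\<lambda>d. {f d, g d}) ` D"
  shows "fort_packing G P" "card P = card D"
proof -
  have centre_not_leaf: "\<not> leaf_at G c d" if "d \<in> D" for c d
    using leaves[OF that] unfolding leaf_at_def by metis
  have "inj_on (\<lambda>d. {f d, g d}) D"
  proof (rule inj_onI)
    fix d d' assume "d \<in> D" "d' \<in> D" "{f d, g d} = {f d', g d'}"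
    then have "f d \<in> {f d', g d'}" by blast
    then have "leaf_at G d' (f d)"
      using leaves[OF \<open>d' \<in> D\<close>] by auto
    then show "d = d'"
      using leaf_at_centre_unique[OF G] leaves[OF \<open>d \<in> D\<close>] by metis
  qed
  then show "card P = card D"
    unfolding P_def by (rule card_image)
  have disjoint: "{f d, g d, d} \<inter> {f d', g d', d'} = {}"
    if d: "d \<in> D" "d' \<in> D" "d \<noteq> d'" for d d'
  proof -
    have "x \<notin> {f d', g d', d'}" if "leaf_at G d x" for x
      using that leaves[OF d(2)] leaf_at_centre_unique[OF G that, of d'] centre_not_leaf[OF d(2)] d(3)
      by auto
    moreover have "d \<notin> {f d', g d', d'}"
      using leaves[OF d(2)] centre_not_leaf[OF d(1)] d(3) by auto
    ultimately show ?thesis using leaves[OF d(1)] by auto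
  qed
  show "fort_packing G P"
    unfolding fort_packing_def
  proof (intro conjI ballI impI)
    show "finite P" unfolding P_def using \<open>finite D\<close> by simp
  next
    fix F assume "F \<in> P"
    then obtain d where "d \<in> D" "F = {f d, g d}" unfolding P_def by blast
    then show "fort G F" using leaves fort_leaf_pair[OF G] by metis
  next
    fix F F' assume "F \<in> P" "F' \<in> P" "F \<noteq> F'"
    then obtain d d' where "d \<in> D" "d' \<in> D" "d \<noteq> d'" "F = {f d, g d}" "F' = {f d', g d'}"
      unfolding P_def by blast
    moreover have "closed_nbhd_set G F \<subseteq> {f d, g d, d}" "closed_nbhd_set G F' \<subseteq> {f d', g d', d'}"
      using closed_nbhd_set_leaf_pair[of G d "f d" "g d"] closed_nbhd_set_leaf_pair[of G d' "f d'" "g d'"]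
        leaves[OF \<open>d \<in> D\<close>] leaves[OF \<open>d' \<in> D\<close>] \<open>F = _\<close> \<open>F' = _\<close> by simp_all
    ultimately show "closed_nbhd_set G F \<inter> closed_nbhd_set G F' = {}"
      using disjoint by blast
  qed
qed

lemma observed_Diff_singleton_if_not_adj:
  assumes D: "dominating_set G D" and x: "x \<in> verts G" "x \<noteq> d" "\<not> adj G d x"
  shows "x \<in> observed G (D - {d})"
proof (rule observed.init[OF _ x(1)])
  have "x \<in> closed_nbhd_set G D" using D x(1) unfolding dominating_set_def by blast
  with x(2,3) show "x \<in> closed_nbhd_set G (D - {d})"
    unfolding closed_nbhd_set_def by blast
qed

text \<open>
A neighbour e of d with a further neighbour z is forced by z: z and all other neighbours of z
are at distance two from d, because a tree has no triangles and no 4-cycles.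
\<close>

lemma observed_Diff_singleton_if_nonleaf_adj:
  assumes T: "tree G" and D: "dominating_set G D"
    and de: "adj G d e" and ez: "adj G e z" and "z \<noteq> d"
  shows "e \<in> observed G (D - {d})"
proof -
  have G: "graph G" using T by (rule tree_graph)
  have "\<not> adj G d z"
    using tree_no_triangle[OF T de ez \<open>z \<noteq> d\<close>[symmetric]] graph_adj_sym[OF G] by blast
  then have z: "z \<in> observed G (D - {d})"
    using observed_Diff_singleton_if_not_adj[OF D] graph_adj_verts[OF G ez] \<open>z \<noteq> d\<close> by blast
  show ?thesis
  proof (rule observed_propagate[OF G z graph_adj_sym[OF G ez]])
    fix w assume zw: "adj G z w" and "w \<noteq> e"
    have "w \<noteq> d" using zw \<open>\<not> adj G d z\<close> graph_adj_sym[OF G] by blast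
    moreover have "\<not> adj G d w"
      using tree_no_square[OF T de ez zw \<open>z \<noteq> d\<close>[symmetric] \<open>w \<noteq> e\<close>[symmetric]]
        graph_adj_sym[OF G] by blast
    ultimately show "w \<in> observed G (D - {d})"
      using observed_Diff_singleton_if_not_adj[OF D] graph_adj_verts[OF G zw] by blast
  qed
qed

lemma power_dominating_set_Diff_singleton:
  assumes T: "tree G" and D: "dominating_set G D"
    and one_leaf: "\<And>l l'. leaf_at G d l \<Longrightarrow> leaf_at G d l' \<Longrightarrow> l = l'"
    and dy: "adj G d y" and yz: "adj G y z" and "z \<noteq> d"
  shows "power_dominating_set G (D - {d})"
proof -
  have G: "graph G" using T by (rule tree_graph)
  let ?O = "observed G (D - {d})"
  have nonleaf: "e \<in> ?O" if "adj G d e" "\<not> leaf_at G d e" for e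
    using that observed_Diff_singleton_if_nonleaf_adj[OF T D] unfolding leaf_at_def by blast
  have "d \<in> ?O"
  proof (rule observed_propagate[OF G nonleaf[OF dy] graph_adj_sym[OF G dy]])
    show "\<not> leaf_at G d y" using yz \<open>z \<noteq> d\<close> unfolding leaf_at_def by blast
  next
    fix w assume yw: "adj G y w" "w \<noteq> d"
    then have "\<not> adj G d w"
      using tree_no_triangle[OF T dy yw(1)] graph_adj_sym[OF G] by blast
    then show "w \<in> ?O"
      using observed_Diff_singleton_if_not_adj[OF D] graph_adj_verts[OF G yw(1)] yw(2) by blast
  qed
  have neighbour: "l \<in> ?O" if dl: "adj G d l" for l
  proof (cases "leaf_at G d l")
    case True
    show ?thesis
    proof (rule observed_propagate[OF G \<open>d \<in> ?O\<close> dl])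
      fix w assume "adj G d w" "w \<noteq> l"
      then show "w \<in> ?O" using nonleaf one_leaf[OF True] by blast
    qed
  qed (use nonleaf dl in blast)
  have "verts G \<subseteq> ?O"
  proof
    fix x assume "x \<in> verts G"
    then show "x \<in> ?O"
      using \<open>d \<in> ?O\<close> neighbour observed_Diff_singleton_if_not_adj[OF D] by metis
  qed
  then show ?thesis
    using D observed_subset_verts[of G "D - {d}"]
    unfolding power_dominating_set_def dominating_set_def by blast
qed

lemma dominating_set_star_centre:
  assumes G: "graph G" and "connected G" and "d \<in> verts G"
    and star: "\<And>y z. adj G d y \<Longrightarrow> adj G y z \<Longrightarrow> z = d"
  shows "dominating_set G {d}"
proof -
  have "verts G \<subseteq> closed_nbhd_set G {d}"
  proof (rule connected_adj_closed_subset[OF \<open>connected G\<close>])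
    fix u w assume "u \<in> closed_nbhd_set G {d}" "adj G u w"
    then show "w \<in> closed_nbhd_set G {d}"
      using star graph_adj_verts[OF G \<open>adj G u w\<close>] unfolding closed_nbhd_set_def by auto
  qed (use \<open>d \<in> verts G\<close> in \<open>auto simp: closed_nbhd_set_def\<close>)
  moreover have "closed_nbhd_set G {d} \<subseteq> verts G"
    using \<open>d \<in> verts G\<close> unfolding closed_nbhd_set_def by blast
  ultimately show ?thesis
    using \<open>d \<in> verts G\<close> unfolding dominating_set_def by blast
qed


lemma tree_fort_packing:
  assumes T: "tree T" and eq: "power_domination_number T = domination_number T"
  obtains A where "fort_packing T A" "power_domination_number T \<le> card A"
proof -
  have G: "graph T" using T by (rule tree_graph)
  obtain D where D: "dominating_set T D" "card D = domination_number T"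
    using domination_number_attained[OF G] .
  have "finite D"
    using D(1) G unfolding dominating_set_def graph_def by (meson finite_subset)
  show ?thesis
  proof (cases "\<forall>d\<in>D. \<exists>l l'. leaf_at T d l \<and> leaf_at T d l' \<and> l \<noteq> l'")
    case True
    then obtain f g where "\<And>d. d \<in> D \<Longrightarrow> leaf_at T d (f d) \<and> leaf_at T d (g d) \<and> f d \<noteq> g d"
      by metis
    from fort_packing_leaf_pairs[OF G \<open>finite D\<close> this] show ?thesis
      using that D(2) eq by simp
  next
    case False
    then obtain d where "d \<in> D"
      and one_leaf: "\<And>l l'. leaf_at T d l \<Longrightarrow> leaf_at T d l' \<Longrightarrow> l = l'"
      by blast
    show ?thesis
    proof (cases "\<exists>y z. adj T d y \<and> adj T y z \<and> z \<noteq> d")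
      case True
      then obtain y z where "adj T d y" "adj T y z" "z \<noteq> d" by blast
      with power_dominating_set_Diff_singleton[OF T D(1) one_leaf]
      have "power_domination_number T \<le> card (D - {d})"
        by (metis power_domination_number_le)
      moreover have "card (D - {d}) < card D"
        using \<open>finite D\<close> \<open>d \<in> D\<close> by (rule card_Diff1_less)
      ultimately show ?thesis using D(2) eq by simp
    next
      case False
      have "d \<in> verts T" using D(1) \<open>d \<in> D\<close> unfolding dominating_set_def by blast
      with False have "dominating_set T {d}"
        using dominating_set_star_centre[OF G] T unfolding tree_def by metis
      then have "power_domination_number T \<le> card {d}"
        by (intro power_domination_number_le power_dominating_set_if_dominating_set)
      moreover have "fort_packing T {verts T}"
        using \<open>d \<in> verts T\<close> unfolding fort_packing_def fort_def by auto
      ultimately show ?thesis using that by simp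
    qed
  qed
qed

theorem theorem1p3:
  fixes T1 :: "'a graph" and T2 :: "'b graph"
  assumes "tree T1" and "tree T2"
    and "power_domination_number T1 = domination_number T1"
    and "power_domination_number T2 = domination_number T2"
  shows "power_domination_number (cart_prod T1 T2)
           \<ge> power_domination_number T1 * power_domination_number T2"
proof -
  obtain A where A: "fort_packing T1 A" "power_domination_number T1 \<le> card A"
    using tree_fort_packing[OF assms(1,3)] .
  obtain B where B: "fort_packing T2 B" "power_domination_number T2 \<le> card B"
    using tree_fort_packing[OF assms(2,4)] .
  have "graph (cart_prod T1 T2)"
    using assms(1,2) by (intro graph_cart_prod tree_graph)
  then have "card A * card B \<le> power_domination_number (cart_prod T1 T2)"
    using card_fort_packing_le_power_domination_number fort_packing_cart_prod[OF A(1) B(1)]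
    by metis
  moreover have "power_domination_number T1 * power_domination_number T2 \<le> card A * card B"
    using A(2) B(2) by (rule mult_le_mono)
  ultimately show ?thesis by linarith
qed

end
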